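(* Let $\mathbb{F}$ be a field, $d\geq3$ and $V$ a vector space over $\mathbb{F}$ of dimension $d+1$. Let $E^*_0,\dots,E^*_d$ be a system of mutually orthogonal idempotents in $\mathrm{End}(V)$ and $A\in\mathrm{End}(V)$ with $E^*_iAE^*_j=0$ if $|i-j|>1$ and $E^*_iAE^*_j\neq0$ if $|i-j|=1$. Assume $A$ is multiplicity-free and bipartite with primitive idempotents $E_0,\dots,E_d$. Let $\theta^*_0,\dots,\theta^*_d\in\mathbb{F}$ be mutually distinct and $A^*=\sum_i\theta^*_iE^*_i$. Assume $E_0$ is normalizing and $(E_0,E_1)$ is a tail. Then there exists $\beta\in\mathbb{F}$ such that $\theta^*_{i-1}-\beta\theta^*_i+\theta^*_{i+1}$ is independent of $i$ for $1\le i\le d-1$.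
   Context: A system of mutually orthogonal idempotents: $E^*_iE^*_j=\delta_{ij}E^*_i$, $\operatorname{rank}E^*_i=1$. $A$ multiplicity-free: $d+1$ distinct eigenvalues in $\mathbb{F}$; the primitive idempotent for an eigenvalue is the projection onto its eigenspace along the other eigenspaces. Bipartite: $\operatorname{tr}(E^*_iA)=0$ for all $i$. $\Delta$: graph on $E_0,\dots,E_d$ with $E_i\neq E_j$ adjacent iff $E_iA^*E_j\neq0$. $(E_0,E_1)$ is a tail if $E_0$ is adjacent to no vertex other than $E_1$ and $E_1$ is adjacent to at most one vertex other than $E_0$. The matrix $Y$ representing $A$ w.r.t. a basis $v_0,\dots,v_d$ satisfies $Av_j=\sum_iY_{ij}v_i$. An eigenvalue $\theta$ of $A$ is normalizing if some basis with $v_i\in E^*_iV$ makes every row sum of the matrix representing $A$ equal to $\theta$; a primitive idempotent is normalizing if its eigenvalue is. *)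

theory Defs
  imports "Jordan_Normal_Form.DL_Rank" "Jordan_Normal_Form.Char_Poly"
begin

text \<open>End(V) for a (d+1)-dimensional F-vector space V is represented, after fixing a
basis, by the square matrices of size n = d+1 over the field 'a.\<close>

definition mtrace :: "'a::comm_ring_1 mat \<Rightarrow> 'a" where
  "mtrace M = (\<Sum>i<dim_row M. M $$ (i, i))"

definition mat_lincomb :: "nat \<Rightarrow> nat \<Rightarrow> (nat \<Rightarrow> 'a::comm_ring_1) \<Rightarrow> (nat \<Rightarrow> 'a mat) \<Rightarrow> 'a mat" where
  "mat_lincomb n d c M = mat n n (\<lambda>(k, l). \<Sum>i\<le>d. c i * M i $$ (k, l))"

definition vec_lincomb :: "nat \<Rightarrow> nat \<Rightarrow> (nat \<Rightarrow> 'a::comm_ring_1) \<Rightarrow> (nat \<Rightarrow> 'a vec) \<Rightarrow> 'a vec" where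
  "vec_lincomb n d c v = vec n (\<lambda>k. \<Sum>i\<le>d. c i * v i $ k)"

definition orth_idem_system :: "nat \<Rightarrow> nat \<Rightarrow> (nat \<Rightarrow> 'a::field mat) \<Rightarrow> bool" where
  "orth_idem_system n d Es \<longleftrightarrow>
     (\<forall>i\<le>d. Es i \<in> carrier_mat n n) \<and>
     (\<forall>i\<le>d. \<forall>j\<le>d. Es i * Es j = (if i = j then Es i else 0\<^sub>m n n)) \<and>
     (\<forall>i\<le>d. vec_space.rank n (Es i) = 1)"

definition mult_free_eigs :: "nat \<Rightarrow> 'a::field mat \<Rightarrow> (nat \<Rightarrow> 'a) \<Rightarrow> bool" where
  "mult_free_eigs d A th \<longleftrightarrow> inj_on th {..d} \<and> (\<forall>i\<le>d. eigenvalue A (th i))"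

definition primitive_idem :: "nat \<Rightarrow> nat \<Rightarrow> 'a::field mat \<Rightarrow> (nat \<Rightarrow> 'a) \<Rightarrow> nat \<Rightarrow> 'a mat \<Rightarrow> bool" where
  "primitive_idem n d A th i E \<longleftrightarrow> E \<in> carrier_mat n n \<and>
     (\<forall>v \<in> carrier_vec n. A *\<^sub>v v = th i \<cdot>\<^sub>v v \<longrightarrow> E *\<^sub>v v = v) \<and>
     (\<forall>j\<le>d. j \<noteq> i \<longrightarrow> (\<forall>v \<in> carrier_vec n. A *\<^sub>v v = th j \<cdot>\<^sub>v v \<longrightarrow> E *\<^sub>v v = 0\<^sub>v n))"

definition bipartite :: "nat \<Rightarrow> (nat \<Rightarrow> 'a::field mat) \<Rightarrow> 'a mat \<Rightarrow> bool" where
  "bipartite d Es A \<longleftrightarrow> (\<forall>i\<le>d. mtrace (Es i * A) = 0)"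

definition normalizing :: "nat \<Rightarrow> nat \<Rightarrow> (nat \<Rightarrow> 'a::field mat) \<Rightarrow> 'a mat \<Rightarrow> 'a \<Rightarrow> bool" where
  "normalizing n d Es A theta \<longleftrightarrow>
     (\<exists>v :: nat \<Rightarrow> 'a vec. \<exists>Y :: nat \<Rightarrow> nat \<Rightarrow> 'a.
        (\<forall>i\<le>d. v i \<in> carrier_vec n \<and> (\<exists>w \<in> carrier_vec n. v i = Es i *\<^sub>v w)) \<and>
        (\<forall>c. vec_lincomb n d c v = 0\<^sub>v n \<longrightarrow> (\<forall>i\<le>d. c i = 0)) \<and>
        (\<forall>j\<le>d. A *\<^sub>v v j = vec_lincomb n d (\<lambda>i. Y i j) v) \<and>
        (\<forall>i\<le>d. (\<Sum>j\<le>d. Y i j) = theta))"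

definition delta_adj :: "nat \<Rightarrow> (nat \<Rightarrow> 'a::field mat) \<Rightarrow> 'a mat \<Rightarrow> nat \<Rightarrow> nat \<Rightarrow> bool" where
  "delta_adj n E As i j \<longleftrightarrow> i \<noteq> j \<and> E i * As * E j \<noteq> 0\<^sub>m n n"

definition is_tail :: "nat \<Rightarrow> nat \<Rightarrow> (nat \<Rightarrow> 'a::field mat) \<Rightarrow> 'a mat \<Rightarrow> bool" where
  "is_tail n d E As \<longleftrightarrow>
     (\<forall>j\<le>d. delta_adj n E As 0 j \<longrightarrow> j = 1) \<and>
     card {j. j \<le> d \<and> j \<noteq> 0 \<and> delta_adj n E As 1 j} \<le> 1"

end

theory Submission
  imports Defs
begin

text \<open>In a normalizing basis \<open>v\<^sub>0, \<dots>, v\<^sub>d\<close> (with \<open>v\<^sub>i \<in> E\<^sup>*\<^sub>iV\<close>) the \<open>E\<^sup>*\<^sub>i\<close> become diagonal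
  matrix units, \<open>A\<^sup>*\<close> becomes \<open>diag(\<theta>\<^sup>*\<^sub>0, \<dots>, \<theta>\<^sup>*\<^sub>d)\<close> and \<open>A\<close> becomes an irreducible tridiagonal
  matrix \<open>M\<close> with zero diagonal and all row sums \<open>\<theta>\<^sub>0\<close>, so the all-ones vector is a
  \<open>\<theta>\<^sub>0\<close>-eigenvector. \<open>M\<close> is symmetrizable, so its eigenvectors \<open>u\<^sub>0 = 1, u\<^sub>1, \<dots>, u\<^sub>d\<close> are
  orthogonal for a weighted form. The tail condition at \<open>E\<^sub>0\<close> puts \<open>A\<^sup>*1 = \<theta>\<^sup>*\<close> into the span of
  \<open>u\<^sub>0, u\<^sub>1\<close>, i.e. \<open>\<theta>\<^sup>*\<^sub>i = a + b x\<^sub>i\<close> with \<open>x = u\<^sub>1\<close>; the condition at \<open>E\<^sub>1\<close> then puts \<open>x\<^sup>2\<close>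
  into the span of \<open>u\<^sub>0, u\<^sub>1, u\<^sub>k\<close>, so \<open>M x\<^sup>2\<close> is a quadratic polynomial in \<open>x\<close>. Read row by
  row, \<open>M x = \<theta>\<^sub>1x\<close> and this quadratic relation say that all pairs \<open>(x\<^sub>i\<^sub>-\<^sub>1, x\<^sub>i)\<close> lie on
  one conic \<open>P(u, y) = K\<close> symmetric in \<open>u, y\<close>. Hence \<open>x\<^sub>i\<^sub>-\<^sub>1\<close> and \<open>x\<^sub>i\<^sub>+\<^sub>1\<close> are the two roots
  of the quadratic \<open>P(\<cdot>, x\<^sub>i) = K\<close>, and Vieta's formula gives
  \<open>x\<^sub>i\<^sub>-\<^sub>1 + x\<^sub>i\<^sub>+\<^sub>1 = \<beta> x\<^sub>i + const\<close>, which the affine map \<open>x \<mapsto> a + b x\<close> transfers to \<open>\<theta>\<^sup>*\<close>.\<close>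

definition cols_mat :: "nat \<Rightarrow> (nat \<Rightarrow> 'a vec) \<Rightarrow> 'a mat" where
  "cols_mat n u = mat n n (\<lambda>(i, j). u j $ i)"

lemma cols_mat_carrier [simp]: "cols_mat n u \<in> carrier_mat n n"
  by (simp add: cols_mat_def)

lemma cols_mat_mult_vec:
  fixes c :: "'a::comm_semiring_0 vec"
  assumes "c \<in> carrier_vec n"
  shows "cols_mat n u *\<^sub>v c = vec n (\<lambda>i. \<Sum>s<n. c $ s * u s $ i)"
  using assms
  by (intro eq_vecI) (auto simp: cols_mat_def mult_mat_vec_def scalar_prod_def lessThan_atLeast0 ac_simps)

lemma mult_cols_mat:
  fixes M :: "'a::comm_semiring_0 mat"
  assumes "M \<in> carrier_mat n n" and "\<And>j. j < n \<Longrightarrow> u j \<in> carrier_vec n"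
  shows "M * cols_mat n u = cols_mat n (\<lambda>j. M *\<^sub>v u j)"
proof (rule eq_matI)
  fix i j assume "i < dim_row (cols_mat n (\<lambda>j. M *\<^sub>v u j))" "j < dim_col (cols_mat n (\<lambda>j. M *\<^sub>v u j))"
  then have ij: "i < n" "j < n" by (auto simp: cols_mat_def)
  have "col (cols_mat n u) j = u j"
    using assms(2)[OF ij(2)] ij by (intro eq_vecI) (auto simp: cols_mat_def)
  then show "(M * cols_mat n u) $$ (i, j) = cols_mat n (\<lambda>j. M *\<^sub>v u j) $$ (i, j)"
    using assms(1) ij by (simp add: cols_mat_def mult_mat_vec_def)
qed (use assms(1) in \<open>auto simp: cols_mat_def\<close>)

lemma cols_mat_mult:
  fixes N :: "'a::comm_semiring_0 mat"
  assumes "N \<in> carrier_mat n n"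
  shows "cols_mat n u * N = cols_mat n (\<lambda>j. vec n (\<lambda>i. \<Sum>k<n. N $$ (k, j) * u k $ i))"
  using assms
  by (intro eq_matI) (auto simp: cols_mat_def scalar_prod_def lessThan_atLeast0 ac_simps)

lemma mult_cols_mat_eq_cols_mat_mult:
  fixes M :: "'a::comm_semiring_0 mat"
  assumes "M \<in> carrier_mat n n" "N \<in> carrier_mat n n" and "\<And>j. j < n \<Longrightarrow> u j \<in> carrier_vec n"
    and "\<And>j. j < n \<Longrightarrow> M *\<^sub>v u j = vec n (\<lambda>i. \<Sum>k<n. N $$ (k, j) * u k $ i)"
  shows "M * cols_mat n u = cols_mat n u * N"
proof -
  have "cols_mat n (\<lambda>j. M *\<^sub>v u j) = cols_mat n (\<lambda>j. vec n (\<lambda>i. \<Sum>k<n. N $$ (k, j) * u k $ i))"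
    using assms(4) by (auto simp: cols_mat_def intro!: eq_matI)
  then show ?thesis using mult_cols_mat[OF assms(1,3)] cols_mat_mult[OF assms(2)] by simp
qed

lemma mult_mat_vec_zero_vec:
  fixes M :: "'a::comm_semiring_0 mat"
  shows "M \<in> carrier_mat m n \<Longrightarrow> M *\<^sub>v 0\<^sub>v n = 0\<^sub>v m"
  by (intro eq_vecI) (auto simp: mult_mat_vec_def scalar_prod_def)

lemma zero_mat_mult_vec:
  fixes v :: "'a::comm_semiring_0 vec"
  shows "v \<in> carrier_vec n \<Longrightarrow> 0\<^sub>m m n *\<^sub>v v = 0\<^sub>v m"
  by (intro eq_vecI) (auto simp: mult_mat_vec_def scalar_prod_def)

lemma smult_vec_eq_zero_imp:
  fixes u :: "'a::field vec"
  assumes "u \<in> carrier_vec n" "u \<noteq> 0\<^sub>v n" "a \<cdot>\<^sub>v u = 0\<^sub>v n"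
  shows "a = 0"
proof -
  obtain i where "i < n" "u $ i \<noteq> 0" using assms(1,2) by (metis carrier_vecD eq_vecI index_zero_vec)
  then show ?thesis using arg_cong[OF assms(3), of "\<lambda>v. v $ i"] assms(1) by simp
qed

lemma inverse_mat_of_kernel_trivial:
  fixes M :: "'a::field mat"
  assumes M: "M \<in> carrier_mat n n"
    and ker: "\<And>c. c \<in> carrier_vec n \<Longrightarrow> M *\<^sub>v c = 0\<^sub>v n \<Longrightarrow> c = 0\<^sub>v n"
  obtains N where "N \<in> carrier_mat n n" "M * N = 1\<^sub>m n" "N * M = 1\<^sub>m n"
proof -
  have "det M \<noteq> 0" using det_0_iff_vec_prod_zero_field[OF M] ker by auto
  then have "M \<in> Units (ring_mat TYPE('a) n ())" by (rule det_non_zero_imp_unit[OF M])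
  then show ?thesis using that unfolding Units_def ring_mat_def by auto
qed

lemma mult_mat_inverse_cancel:
  fixes P :: "'a::semiring_1 mat"
  assumes "P \<in> carrier_mat n n" "Q \<in> carrier_mat n n" "P * Q = 1\<^sub>m n" "X \<in> carrier_mat n m"
  shows "P * (Q * X) = X"
  using assoc_mult_mat[OF assms(1,2,4), symmetric] assms(3,4) by (simp add: left_mult_one_mat)

lemma similar_mat_witI_of_mult:
  assumes "M \<in> carrier_mat n n" "N \<in> carrier_mat n n" "P \<in> carrier_mat n n" "Q \<in> carrier_mat n n"
    and "P * Q = 1\<^sub>m n" "Q * P = 1\<^sub>m n" "M * P = P * N"
  shows "similar_mat_wit M N P Q"
proof (rule similar_mat_witI[of _ _ n])
  have "M = M * (P * Q)" using assms(1,5) by (simp add: right_mult_one_mat)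
  also have "\<dots> = (M * P) * Q" using assms(1,3,4) by simp
  finally show "M = P * N * Q" unfolding assms(7) .
qed (use assms in auto)

lemma similar_mat_wit_cols_mat:
  fixes M :: "'a::comm_ring_1 mat"
  assumes "M \<in> carrier_mat n n" "N \<in> carrier_mat n n" "\<And>j. j < n \<Longrightarrow> u j \<in> carrier_vec n"
    and "C \<in> carrier_mat n n" "cols_mat n u * C = 1\<^sub>m n" "C * cols_mat n u = 1\<^sub>m n"
    and "\<And>j. j < n \<Longrightarrow> M *\<^sub>v u j = vec n (\<lambda>i. \<Sum>k<n. N $$ (k, j) * u k $ i)"
  shows "similar_mat_wit M N (cols_mat n u) C"
  using assms mult_cols_mat_eq_cols_mat_mult[OF assms(1,2,3,7)]
  by (intro similar_mat_witI_of_mult) auto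

lemma similar_mat_wit_conj:
  assumes "similar_mat_wit A B P Q" "A \<in> carrier_mat n n" "X \<in> carrier_mat n n"
  shows "similar_mat_wit X (Q * X * P) P Q"
proof -
  note s = similar_mat_witD2[OF assms(2,1)]
  have "X = P * (Q * X * P) * Q"
    using s assms(3) by (simp add: assoc_mult_mat[of _ n n _ n _ n] mult_mat_inverse_cancel[of P n Q] right_mult_one_mat)
  then show ?thesis using s assms(3) by (intro similar_mat_witI[of _ _ n]) auto
qed

lemma similar_mat_wit_mult:
  assumes "similar_mat_wit A A' P Q" "similar_mat_wit B B' P Q" "A \<in> carrier_mat n n"
  shows "similar_mat_wit (A * B) (A' * B') P Q"
proof -
  note a = similar_mat_witD2[OF assms(3,1)]
  have "B \<in> carrier_mat n n"
    using a(6) similar_mat_witD[OF refl assms(2)] by (metis carrier_matD(2) carrier_matI)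
  note b = similar_mat_witD2[OF this assms(2)]
  have "A * B = P * (A' * B') * Q"
    using a b by (simp add: assoc_mult_mat[of _ n n _ n _ n] mult_mat_inverse_cancel[of Q n P _ n])
  then show ?thesis using a b by (intro similar_mat_witI[of _ _ n]) auto
qed

lemma similar_mat_wit_zero_iff:
  assumes "similar_mat_wit A B P Q" "A \<in> carrier_mat n n"
  shows "A = 0\<^sub>m n n \<longleftrightarrow> B = 0\<^sub>m n n"
proof -
  note s = similar_mat_witD2[OF assms(2,1)]
  have "B = Q * A * P" using similar_mat_witD2[OF s(5) similar_mat_wit_sym[OF assms(1)]] by simp
  then show ?thesis using s by auto
qed

lemma mtrace_mult_comm:
  fixes P Q :: "'a::comm_ring_1 mat"
  assumes "P \<in> carrier_mat n m" "Q \<in> carrier_mat m n"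
  shows "mtrace (P * Q) = mtrace (Q * P)"
proof -
  have "mtrace (P * Q) = (\<Sum>i<n. \<Sum>k<m. P $$ (i, k) * Q $$ (k, i))"
    unfolding mtrace_def using assms by (simp add: scalar_prod_def lessThan_atLeast0)
  also have "\<dots> = (\<Sum>k<m. \<Sum>i<n. Q $$ (k, i) * P $$ (i, k))"
    by (subst sum.swap) (simp add: ac_simps)
  also have "\<dots> = mtrace (Q * P)"
    unfolding mtrace_def using assms by (simp add: scalar_prod_def lessThan_atLeast0)
  finally show ?thesis .
qed

lemma mtrace_similar_mat_wit:
  fixes A :: "'a::comm_ring_1 mat"
  assumes "similar_mat_wit A B P Q" "A \<in> carrier_mat n n"
  shows "mtrace A = mtrace B"
proof -
  note s = similar_mat_witD2[OF assms(2,1)]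
  have "mtrace A = mtrace ((B * Q) * P)"
    using s mtrace_mult_comm[of P n n "B * Q"] by simp
  also have "\<dots> = mtrace B"
    using s by (simp add: right_mult_one_mat)
  finally show ?thesis .
qed

lemma eigenvalue_similar_mat_wit:
  fixes A :: "'a::field mat"
  assumes "similar_mat_wit A B P Q" "A \<in> carrier_mat n n"
  shows "eigenvalue A k \<longleftrightarrow> eigenvalue B k"
proof -
  have "B \<in> carrier_mat n n" using similar_mat_witD2[OF assms(2,1)] by simp
  moreover have "char_poly A = char_poly B"
    using assms(1) by (intro char_poly_similar) (auto simp: similar_mat_def)
  ultimately show ?thesis using eigenvalue_root_char_poly assms(2) by metis
qed

lemma primitive_idem_similar_mat_wit:
  fixes A :: "'a::field mat"
  assumes sim: "similar_mat_wit A B P Q" and A: "A \<in> carrier_mat n n"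
    and E: "primitive_idem n d A th i E"
  shows "primitive_idem n d B th i (Q * E * P)"
proof -
  note s = similar_mat_witD2[OF A sim]
  have Ec: "E \<in> carrier_mat n n" using E unfolding primitive_idem_def by simp
  have conj: "Q * E * P *\<^sub>v v = Q *\<^sub>v (E *\<^sub>v (P *\<^sub>v v))" if "v \<in> carrier_vec n" for v
    using s Ec that by (simp add: assoc_mult_mat_vec[of _ n n _ n])
  have cancel: "Q *\<^sub>v (P *\<^sub>v v) = v" if "v \<in> carrier_vec n" for v
    using s that by (simp add: assoc_mult_mat_vec[symmetric, of Q n n P n])
  have eig: "A *\<^sub>v (P *\<^sub>v v) = c \<cdot>\<^sub>v (P *\<^sub>v v)"
    if "v \<in> carrier_vec n" "B *\<^sub>v v = c \<cdot>\<^sub>v v" for v c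
  proof -
    have "A *\<^sub>v (P *\<^sub>v v) = P *\<^sub>v (B *\<^sub>v (Q *\<^sub>v (P *\<^sub>v v)))"
      using s that(1) by (simp add: assoc_mult_mat_vec[of _ n n _ n])
    also have "\<dots> = c \<cdot>\<^sub>v (P *\<^sub>v v)"
      using s that cancel by (simp add: mult_mat_vec)
    finally show ?thesis .
  qed
  show ?thesis
    unfolding primitive_idem_def
  proof (intro conjI ballI allI impI)
    fix v assume "v \<in> carrier_vec n" "B *\<^sub>v v = th i \<cdot>\<^sub>v v"
    then show "Q * E * P *\<^sub>v v = v"
      using E eig conj cancel s unfolding primitive_idem_def by simp
  next
    fix j v assume "j \<le> d" "j \<noteq> i" "v \<in> carrier_vec n" "B *\<^sub>v v = th j \<cdot>\<^sub>v v"
    then show "Q * E * P *\<^sub>v v = 0\<^sub>v n"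
      using E eig conj s unfolding primitive_idem_def by auto
  qed (use s Ec in simp)
qed

lemma sum_mat_diag_col:
  fixes f g :: "nat \<Rightarrow> 'a::semiring_0"
  assumes "j < n"
  shows "(\<Sum>k<n. mat_diag n f $$ (k, j) * g k) = f j * g j"
proof -
  have "(\<Sum>k<n. mat_diag n f $$ (k, j) * g k) = (\<Sum>k<n. if k = j then f j * g j else 0)"
    using assms by (intro sum.cong) (auto simp: mat_diag_def)
  then show ?thesis using assms by simp
qed

lemma mat_diag_mult_vec:
  fixes f :: "nat \<Rightarrow> 'a::semiring_0"
  assumes "v \<in> carrier_vec n"
  shows "mat_diag n f *\<^sub>v v = vec n (\<lambda>i. f i * v $ i)"
proof (rule eq_vecI)
  fix i assume "i < dim_vec (vec n (\<lambda>i. f i * v $ i))"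
  then have i: "i < n" by simp
  have "(mat_diag n f *\<^sub>v v) $ i = (\<Sum>j<n. mat_diag n f $$ (i, j) * v $ j)"
    using assms i by (simp add: mat_diag_def mult_mat_vec_def scalar_prod_def lessThan_atLeast0)
  also have "\<dots> = (\<Sum>j<n. if j = i then f i * v $ i else 0)"
    using i by (intro sum.cong) (auto simp: mat_diag_def)
  finally show "(mat_diag n f *\<^sub>v v) $ i = vec n (\<lambda>i. f i * v $ i) $ i" using i by simp
qed (simp add: mat_diag_def)

abbreviation diag_unit_mat :: "nat \<Rightarrow> nat \<Rightarrow> 'a::zero_neq_one mat" where
  "diag_unit_mat n i \<equiv> mat_diag n (\<lambda>k. if k = i then 1 else 0)"

lemma diag_unit_sandwich_eq_zero_iff:
  fixes M :: "'a::semiring_1 mat"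
  assumes "M \<in> carrier_mat n n" "i < n" "j < n"
  shows "diag_unit_mat n i * M * diag_unit_mat n j = 0\<^sub>m n n \<longleftrightarrow> M $$ (i, j) = 0"
proof -
  have "diag_unit_mat n i * M * diag_unit_mat n j
      = mat n n (\<lambda>(a, b). (if a = i then 1 else 0) * M $$ (a, b) * (if b = j then 1 else 0))"
    using assms(1) by (auto simp: mat_diag_mult_left mat_diag_mult_right[of _ n n] intro!: eq_matI)
  moreover have "mat n n (\<lambda>(a, b). (if a = i then 1 else 0) * M $$ (a, b) * (if b = j then 1 else 0))
      = 0\<^sub>m n n \<longleftrightarrow> M $$ (i, j) = 0"
  proof
    assume "mat n n (\<lambda>(a, b). (if a = i then 1 else 0) * M $$ (a, b) * (if b = j then 1 else 0)) = 0\<^sub>m n n"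
    then have "mat n n (\<lambda>(a, b). (if a = i then 1 else 0) * M $$ (a, b) * (if b = j then 1 else 0)) $$ (i, j)
      = 0\<^sub>m n n $$ (i, j)" by simp
    then show "M $$ (i, j) = 0" using assms(2,3) by simp
  qed (auto intro!: eq_matI)
  ultimately show ?thesis by simp
qed

lemma mtrace_diag_unit_mult:
  fixes M :: "'a::comm_ring_1 mat"
  assumes "M \<in> carrier_mat n n" "i < n"
  shows "mtrace (diag_unit_mat n i * M) = M $$ (i, i)"
proof -
  have "mtrace (diag_unit_mat n i * M) = (\<Sum>a<n. (if a = i then 1 else 0) * M $$ (a, a))"
    using assms(1) by (simp add: mat_diag_mult_left mtrace_def)
  also have "\<dots> = (\<Sum>a<n. if a = i then M $$ (i, i) else 0)"
    by (intro sum.cong) auto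
  finally show ?thesis using assms(2) by simp
qed

section \<open>The normalizing basis\<close>

lemma mat_lincomb_mult_vec:
  fixes M :: "nat \<Rightarrow> 'a::comm_ring_1 mat"
  assumes "\<And>i. i \<le> d \<Longrightarrow> M i \<in> carrier_mat n n" "p \<in> carrier_vec n"
  shows "mat_lincomb n d c M *\<^sub>v p = vec n (\<lambda>r. \<Sum>i\<le>d. c i * (M i *\<^sub>v p) $ r)"
proof (rule eq_vecI)
  have dim: "dim_row (M i) = n" "dim_col (M i) = n" if "i \<le> d" for i
    using assms(1)[OF that] by auto
  fix r assume "r < dim_vec (vec n (\<lambda>r. \<Sum>i\<le>d. c i * (M i *\<^sub>v p) $ r))"
  then have r: "r < n" by simp
  have "(mat_lincomb n d c M *\<^sub>v p) $ r = (\<Sum>l<n. \<Sum>i\<le>d. c i * (M i $$ (r, l) * p $ l))"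
    using r assms(2) by (simp add: mat_lincomb_def mult_mat_vec_def scalar_prod_def lessThan_atLeast0
        sum_distrib_left sum_distrib_right ac_simps)
  also have "\<dots> = (\<Sum>i\<le>d. c i * (\<Sum>l<n. M i $$ (r, l) * p $ l))"
    by (subst sum.swap) (simp add: sum_distrib_left)
  also have "\<dots> = (\<Sum>i\<le>d. c i * (M i *\<^sub>v p) $ r)"
    using assms r by (intro sum.cong) (auto simp: mult_mat_vec_def scalar_prod_def lessThan_atLeast0 dim)
  finally show "(mat_lincomb n d c M *\<^sub>v p) $ r = vec n (\<lambda>r. \<Sum>i\<le>d. c i * (M i *\<^sub>v p) $ r) $ r"
    using r by simp
qed (simp add: mat_lincomb_def)

lemma orth_idem_system_mult_range:
  assumes "orth_idem_system n d Es" "i \<le> d" "j \<le> d" "w \<in> carrier_vec n"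
  shows "Es i *\<^sub>v (Es j *\<^sub>v w) = (if i = j then Es j *\<^sub>v w else 0\<^sub>v n)"
proof -
  have "Es i \<in> carrier_mat n n" "Es j \<in> carrier_mat n n" "Es i * Es j = (if i = j then Es i else 0\<^sub>m n n)"
    using assms(1-3) unfolding orth_idem_system_def by auto
  then show ?thesis
    using assoc_mult_mat_vec[of "Es i" n n "Es j" n w] zero_mat_mult_vec[OF assms(4)] assms(4)
    by (cases "i = j") auto
qed

lemma mat_lincomb_mult_vec_range:
  assumes Es: "orth_idem_system n d Es" and j: "j \<le> d" and w: "w \<in> carrier_vec n"
  shows "mat_lincomb n d c Es *\<^sub>v (Es j *\<^sub>v w) = c j \<cdot>\<^sub>v (Es j *\<^sub>v w)"
proof -
  have Esc: "Es i \<in> carrier_mat n n" if "i \<le> d" for i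
    using Es that unfolding orth_idem_system_def by simp
  have "mat_lincomb n d c Es *\<^sub>v (Es j *\<^sub>v w) = vec n (\<lambda>r. \<Sum>i\<le>d. c i * (Es i *\<^sub>v (Es j *\<^sub>v w)) $ r)"
    by (rule mat_lincomb_mult_vec) (use Esc mult_mat_vec_carrier[OF Esc[OF j] w] in auto)
  also have "\<dots> = c j \<cdot>\<^sub>v (Es j *\<^sub>v w)"
  proof (rule eq_vecI)
    fix r assume "r < dim_vec (c j \<cdot>\<^sub>v (Es j *\<^sub>v w))"
    then have r: "r < n" using Esc[OF j] by simp
    have "(\<Sum>i\<le>d. c i * (Es i *\<^sub>v (Es j *\<^sub>v w)) $ r) = (\<Sum>i\<le>d. if i = j then c j * (Es j *\<^sub>v w) $ r else 0)"
      using orth_idem_system_mult_range[OF Es _ j w] r by (intro sum.cong) auto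
    then show "vec n (\<lambda>r. \<Sum>i\<le>d. c i * (Es i *\<^sub>v (Es j *\<^sub>v w)) $ r) $ r = (c j \<cdot>\<^sub>v (Es j *\<^sub>v w)) $ r"
      using r j Esc[OF j] by simp
  qed (use Esc[OF j] in simp)
  finally show ?thesis .
qed

lemma normalizing_basis_similar:
  fixes Es :: "nat \<Rightarrow> 'a::field mat"
  assumes Es: "orth_idem_system (Suc d) d Es" and A: "A \<in> carrier_mat (Suc d) (Suc d)"
    and norm: "normalizing (Suc d) d Es A \<theta>"
  obtains Y W C where
    "similar_mat_wit A (mat (Suc d) (Suc d) (\<lambda>(i, j). Y i j)) W C"
    "mat (Suc d) (Suc d) (\<lambda>(i, j). Y i j) *\<^sub>v vec (Suc d) (\<lambda>_. 1) = \<theta> \<cdot>\<^sub>v vec (Suc d) (\<lambda>_. 1)"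
    "\<And>i. i \<le> d \<Longrightarrow> similar_mat_wit (Es i) (diag_unit_mat (Suc d) i) W C"
    "\<And>c. similar_mat_wit (mat_lincomb (Suc d) d c Es) (mat_diag (Suc d) c) W C"
proof -
  let ?n = "Suc d"
  obtain v :: "nat \<Rightarrow> 'a vec" and Y :: "nat \<Rightarrow> nat \<Rightarrow> 'a" where
    v: "\<forall>i\<le>d. v i \<in> carrier_vec ?n \<and> (\<exists>w \<in> carrier_vec ?n. v i = Es i *\<^sub>v w)" and
    indep: "\<forall>c. vec_lincomb ?n d c v = 0\<^sub>v ?n \<longrightarrow> (\<forall>i\<le>d. c i = 0)" and
    Av: "\<forall>j\<le>d. A *\<^sub>v v j = vec_lincomb ?n d (\<lambda>i. Y i j) v" and
    rows: "\<forall>i\<le>d. (\<Sum>j\<le>d. Y i j) = \<theta>"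
    using norm unfolding normalizing_def by blast
  have vc: "v j \<in> carrier_vec ?n" if "j < ?n" for j using v that by simp
  have Es_v: "Es i *\<^sub>v v j = (if i = j then v j else 0\<^sub>v ?n)" if "i \<le> d" "j \<le> d" for i j
    using v orth_idem_system_mult_range[OF Es that] that by force
  have lincomb_v: "mat_lincomb ?n d c Es *\<^sub>v v j = c j \<cdot>\<^sub>v v j" if "j \<le> d" for c j
    using v mat_lincomb_mult_vec_range[OF Es that] that by force
  define W where "W = cols_mat ?n v"
  have W_lincomb: "W *\<^sub>v c = vec_lincomb ?n d (\<lambda>i. c $ i) v" if "c \<in> carrier_vec ?n" for c
    unfolding W_def cols_mat_mult_vec[OF that] vec_lincomb_def lessThan_Suc_atMost ..
  obtain C where C: "C \<in> carrier_mat ?n ?n" "W * C = 1\<^sub>m ?n" "C * W = 1\<^sub>m ?n"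
  proof (rule inverse_mat_of_kernel_trivial)
    show "W \<in> carrier_mat ?n ?n" unfolding W_def by simp
    show "c = 0\<^sub>v ?n" if "c \<in> carrier_vec ?n" "W *\<^sub>v c = 0\<^sub>v ?n" for c
    proof -
      have "\<forall>i\<le>d. c $ i = 0" using indep W_lincomb[OF that(1)] that(2) by simp
      then show ?thesis using that(1) by (intro eq_vecI) auto
    qed
  qed
  have sim: "similar_mat_wit M N W C"
    if "M \<in> carrier_mat ?n ?n" "N \<in> carrier_mat ?n ?n"
      and "\<And>j. j < ?n \<Longrightarrow> M *\<^sub>v v j = vec ?n (\<lambda>r. \<Sum>k<?n. N $$ (k, j) * v k $ r)" for M N
    unfolding W_def by (rule similar_mat_wit_cols_mat[OF that(1,2) vc C[unfolded W_def] that(3)])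
  show ?thesis
  proof
    show "similar_mat_wit A (mat ?n ?n (\<lambda>(i, j). Y i j)) W C"
      using A Av by (intro sim) (auto simp: vec_lincomb_def lessThan_Suc_atMost)
    show "mat ?n ?n (\<lambda>(i, j). Y i j) *\<^sub>v vec ?n (\<lambda>_. 1) = \<theta> \<cdot>\<^sub>v vec ?n (\<lambda>_. 1)"
      using rows by (intro eq_vecI)
        (auto simp: mult_mat_vec_def scalar_prod_def lessThan_atLeast0[symmetric] lessThan_Suc_atMost)
    show "similar_mat_wit (Es i) (diag_unit_mat ?n i) W C" if "i \<le> d" for i
    proof (rule sim)
      fix j assume j: "j < ?n"
      show "Es i *\<^sub>v v j = vec ?n (\<lambda>r. \<Sum>k<?n. diag_unit_mat ?n i $$ (k, j) * v k $ r)"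
        unfolding sum_mat_diag_col[OF j] using Es_v[OF that, of j] j vc[OF j] by (auto intro!: eq_vecI)
    qed (use Es that in \<open>simp_all add: orth_idem_system_def\<close>)
    show "similar_mat_wit (mat_lincomb ?n d c Es) (mat_diag ?n c) W C" for c
    proof (rule sim)
      fix j assume j: "j < ?n"
      show "mat_lincomb ?n d c Es *\<^sub>v v j = vec ?n (\<lambda>r. \<Sum>k<?n. mat_diag ?n c $$ (k, j) * v k $ r)"
        unfolding sum_mat_diag_col[OF j] using lincomb_v[of j c] j vc[OF j] by (auto intro!: eq_vecI)
    qed (simp_all add: mat_lincomb_def)
  qed
qed

definition bipartite_tridiagonal :: "nat \<Rightarrow> 'a::zero mat \<Rightarrow> bool" where
  "bipartite_tridiagonal n M \<longleftrightarrow> M \<in> carrier_mat n n \<and>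
     (\<forall>i<n. \<forall>j<n. j \<noteq> i + 1 \<and> i \<noteq> j + 1 \<longrightarrow> M $$ (i, j) = 0) \<and>
     (\<forall>i. i + 1 < n \<longrightarrow> M $$ (i, i + 1) \<noteq> 0 \<and> M $$ (i + 1, i) \<noteq> 0)"

lemma similar_diag_units_bipartite_tridiagonal:
  fixes A :: "'a::field mat"
  assumes simA: "similar_mat_wit A M W C" and A: "A \<in> carrier_mat (Suc d) (Suc d)"
    and simEs: "\<And>i. i \<le> d \<Longrightarrow> similar_mat_wit (Es i) (diag_unit_mat (Suc d) i) W C"
    and tri0: "\<forall>i\<le>d. \<forall>j\<le>d. (i + 1 < j \<or> j + 1 < i) \<longrightarrow> Es i * A * Es j = 0\<^sub>m (Suc d) (Suc d)"
    and tri1: "\<forall>i\<le>d. \<forall>j\<le>d. (i + 1 = j \<or> j + 1 = i) \<longrightarrow> Es i * A * Es j \<noteq> 0\<^sub>m (Suc d) (Suc d)"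
    and bip: "bipartite d Es A"
  shows "bipartite_tridiagonal (Suc d) M"
proof -
  let ?n = "Suc d"
  have M: "M \<in> carrier_mat ?n ?n" using similar_mat_witD2[OF A simA] by simp
  have Esc: "Es i \<in> carrier_mat ?n ?n" if "i \<le> d" for i
    using similar_mat_witD2[OF mat_diag_dim similar_mat_wit_sym[OF simEs[OF that]]] by simp
  have zero_iff: "Es i * A * Es j = 0\<^sub>m ?n ?n \<longleftrightarrow> M $$ (i, j) = 0" if "i \<le> d" "j \<le> d" for i j
  proof -
    have "similar_mat_wit (Es i * A * Es j) (diag_unit_mat ?n i * M * diag_unit_mat ?n j) W C"
      using Esc[OF that(1)] A that by (intro similar_mat_wit_mult[where n = ?n] simEs simA) auto
    then have "Es i * A * Es j = 0\<^sub>m ?n ?n \<longleftrightarrow> diag_unit_mat ?n i * M * diag_unit_mat ?n j = 0\<^sub>m ?n ?n"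
      by (rule similar_mat_wit_zero_iff) (use Esc[OF that(1)] Esc[OF that(2)] A in simp)
    also have "\<dots> \<longleftrightarrow> M $$ (i, j) = 0"
      using diag_unit_sandwich_eq_zero_iff[OF M] that by simp
    finally show ?thesis .
  qed
  have diag: "M $$ (i, i) = 0" if "i \<le> d" for i
  proof -
    have "similar_mat_wit (Es i * A) (diag_unit_mat ?n i * M) W C"
      using Esc[OF that] by (intro similar_mat_wit_mult[where n = ?n] simEs simA that)
    then have "mtrace (Es i * A) = mtrace (diag_unit_mat ?n i * M)"
      by (rule mtrace_similar_mat_wit[where n = ?n]) (use Esc[OF that] A in simp)
    then have "mtrace (Es i * A) = M $$ (i, i)"
      using mtrace_diag_unit_mult[OF M] that by simp
    then show ?thesis using bip that unfolding bipartite_def by simp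
  qed
  show ?thesis
    unfolding bipartite_tridiagonal_def
  proof (intro conjI M allI impI)
    fix i j assume ij: "i < ?n" "j < ?n" and far: "j \<noteq> i + 1 \<and> i \<noteq> j + 1"
    show "M $$ (i, j) = 0"
    proof (cases "i = j")
      case False
      with far have "i + 1 < j \<or> j + 1 < i" by arith
      then have "Es i * A * Es j = 0\<^sub>m ?n ?n" using tri0 ij by (auto simp: less_Suc_eq_le)
      then show ?thesis using zero_iff ij by (simp add: less_Suc_eq_le)
    qed (use diag ij in simp)
  next
    fix i assume "i + 1 < ?n"
    then show "M $$ (i, i + 1) \<noteq> 0" "M $$ (i + 1, i) \<noteq> 0"
      using tri1 zero_iff by auto
  qed
qed

lemma is_tail_sandwich_zero:
  assumes "is_tail n d E As"
  obtains k where "k \<le> d"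
    "\<And>s. s \<le> d \<Longrightarrow> s \<noteq> 0 \<Longrightarrow> s \<noteq> 1 \<Longrightarrow> E 0 * As * E s = 0\<^sub>m n n"
    "\<And>s. s \<le> d \<Longrightarrow> s \<noteq> 0 \<Longrightarrow> s \<noteq> 1 \<Longrightarrow> s \<noteq> k \<Longrightarrow> E 1 * As * E s = 0\<^sub>m n n"
proof -
  define S where "S = {j. j \<le> d \<and> j \<noteq> 0 \<and> delta_adj n E As 1 j}"
  have card: "card S \<le> 1" using assms unfolding is_tail_def S_def by simp
  have fin: "finite S" unfolding S_def by simp
  obtain k where k: "k \<le> d" "S \<subseteq> {k}"
  proof (cases "S = {}")
    case False
    then have "card S = 1" using card fin by (simp add: card_gt_0_iff le_antisym Suc_leI)
    then obtain k where "S = {k}" by (rule card_1_singletonE)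
    then show ?thesis using that[of k] unfolding S_def by auto
  qed (use that[of 0] in simp)
  show ?thesis
  proof (rule that[OF k(1)])
    show "E 0 * As * E s = 0\<^sub>m n n" if "s \<le> d" "s \<noteq> 0" "s \<noteq> 1" for s
      using assms that unfolding is_tail_def delta_adj_def by auto
    show "E 1 * As * E s = 0\<^sub>m n n" if "s \<le> d" "s \<noteq> 0" "s \<noteq> 1" "s \<noteq> k" for s
      using k(2) that unfolding S_def delta_adj_def by auto
  qed
qed

lemma normalized_tail_model:
  fixes Es E :: "nat \<Rightarrow> 'a::field mat"
  assumes Es: "orth_idem_system (Suc d) d Es" and A: "A \<in> carrier_mat (Suc d) (Suc d)"
    and tri0: "\<forall>i\<le>d. \<forall>j\<le>d. (i + 1 < j \<or> j + 1 < i) \<longrightarrow> Es i * A * Es j = 0\<^sub>m (Suc d) (Suc d)"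
    and tri1: "\<forall>i\<le>d. \<forall>j\<le>d. (i + 1 = j \<or> j + 1 = i) \<longrightarrow> Es i * A * Es j \<noteq> 0\<^sub>m (Suc d) (Suc d)"
    and mf: "mult_free_eigs d A th"
    and prim: "\<forall>i\<le>d. primitive_idem (Suc d) d A th i (E i)"
    and bip: "bipartite d Es A"
    and norm: "normalizing (Suc d) d Es A (th 0)"
    and tail: "is_tail (Suc d) d E (mat_lincomb (Suc d) d ts Es)"
  obtains M F k where
    "bipartite_tridiagonal (Suc d) M"
    "M *\<^sub>v vec (Suc d) (\<lambda>_. 1) = th 0 \<cdot>\<^sub>v vec (Suc d) (\<lambda>_. 1)"
    "\<And>s. s \<le> d \<Longrightarrow> eigenvalue M (th s)"
    "\<And>s. s \<le> d \<Longrightarrow> primitive_idem (Suc d) d M th s (F s)"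
    "k \<le> d"
    "\<And>s. s \<le> d \<Longrightarrow> s \<noteq> 0 \<Longrightarrow> s \<noteq> 1 \<Longrightarrow> F 0 * mat_diag (Suc d) ts * F s = 0\<^sub>m (Suc d) (Suc d)"
    "\<And>s. s \<le> d \<Longrightarrow> s \<noteq> 0 \<Longrightarrow> s \<noteq> 1 \<Longrightarrow> s \<noteq> k \<Longrightarrow>
      F 1 * mat_diag (Suc d) ts * F s = 0\<^sub>m (Suc d) (Suc d)"
proof -
  let ?n = "Suc d"
  obtain Y W C where simA: "similar_mat_wit A (mat ?n ?n (\<lambda>(i, j). Y i j)) W C"
    and ones: "mat ?n ?n (\<lambda>(i, j). Y i j) *\<^sub>v vec ?n (\<lambda>_. 1) = th 0 \<cdot>\<^sub>v vec ?n (\<lambda>_. 1)"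
    and simEs: "\<And>i. i \<le> d \<Longrightarrow> similar_mat_wit (Es i) (diag_unit_mat ?n i) W C"
    and simAs: "\<And>c. similar_mat_wit (mat_lincomb ?n d c Es) (mat_diag ?n c) W C"
    by (rule normalizing_basis_similar[OF Es A norm]) (rule that)
  have As: "mat_lincomb ?n d ts Es \<in> carrier_mat ?n ?n" by (simp add: mat_lincomb_def)
  define M where "M = mat ?n ?n (\<lambda>(i, j). Y i j)"
  define F where "F s = C * E s * W" for s
  have Ec: "E s \<in> carrier_mat ?n ?n" if "s \<le> d" for s
    using prim that unfolding primitive_idem_def by simp
  have simE: "similar_mat_wit (E s) (F s) W C" if "s \<le> d" for s
    unfolding F_def by (rule similar_mat_wit_conj[OF simA A Ec[OF that]])
  have sandwich: "E r * mat_lincomb ?n d ts Es * E s = 0\<^sub>m ?n ?n \<longleftrightarrow>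
      F r * mat_diag ?n ts * F s = 0\<^sub>m ?n ?n" if "r \<le> d" "s \<le> d" for r s
  proof (rule similar_mat_wit_zero_iff[where n = ?n])
    show "similar_mat_wit (E r * mat_lincomb ?n d ts Es * E s) (F r * mat_diag ?n ts * F s) W C"
      using Ec[OF that(1)] As by (intro similar_mat_wit_mult[where n = ?n] simE simAs that) auto
  qed (use Ec[OF that(1)] Ec[OF that(2)] As in \<open>simp add: mult_carrier_mat[of _ ?n ?n]\<close>)
  obtain k where k: "k \<le> d"
    and tail0: "\<And>s. s \<le> d \<Longrightarrow> s \<noteq> 0 \<Longrightarrow> s \<noteq> 1 \<Longrightarrow> E 0 * mat_lincomb ?n d ts Es * E s = 0\<^sub>m ?n ?n"
    and tail1: "\<And>s. s \<le> d \<Longrightarrow> s \<noteq> 0 \<Longrightarrow> s \<noteq> 1 \<Longrightarrow> s \<noteq> k \<Longrightarrow>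
      E 1 * mat_lincomb ?n d ts Es * E s = 0\<^sub>m ?n ?n"
    by (rule is_tail_sandwich_zero[OF tail]) (rule that)
  show ?thesis
  proof (rule that[of M F k])
    show "bipartite_tridiagonal ?n M"
      unfolding M_def by (rule similar_diag_units_bipartite_tridiagonal[OF simA A simEs tri0 tri1 bip])
    show "M *\<^sub>v vec ?n (\<lambda>_. 1) = th 0 \<cdot>\<^sub>v vec ?n (\<lambda>_. 1)"
      unfolding M_def by (rule ones)
    show "eigenvalue M (th s)" if "s \<le> d" for s
      using eigenvalue_similar_mat_wit[OF simA A] mf that unfolding M_def mult_free_eigs_def by simp
    show "primitive_idem ?n d M th s (F s)" if "s \<le> d" for s
      unfolding M_def F_def using prim that by (intro primitive_idem_similar_mat_wit[OF simA A]) simp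
    show "F 0 * mat_diag ?n ts * F s = 0\<^sub>m ?n ?n" if "s \<le> d" "s \<noteq> 0" "s \<noteq> 1" for s
      using sandwich[of 0 s] tail0[OF that] that by simp
    show "F 1 * mat_diag ?n ts * F s = 0\<^sub>m ?n ?n" if "s \<le> d" "s \<noteq> 0" "s \<noteq> 1" "s \<noteq> k" for s
      using sandwich[of 1 s] tail1[OF that] that by simp
  qed (rule k)
qed

section \<open>A weighted form for tridiagonal matrices\<close>

definition wprod :: "nat \<Rightarrow> (nat \<Rightarrow> 'a::comm_ring_1) \<Rightarrow> 'a vec \<Rightarrow> 'a vec \<Rightarrow> 'a" where
  "wprod n m p q = (\<Sum>i<n. m i * p $ i * q $ i)"

lemma wprod_comm: "wprod n m p q = wprod n m q p"
  unfolding wprod_def by (simp add: ac_simps)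

lemma wprod_smult_left: "p \<in> carrier_vec n \<Longrightarrow> wprod n m (a \<cdot>\<^sub>v p) q = a * wprod n m p q"
  unfolding wprod_def by (simp add: sum_distrib_left ac_simps)

lemma wprod_cols_mat_mult_vec:
  assumes "c \<in> carrier_vec n"
  shows "wprod n m (cols_mat n u *\<^sub>v c) q = (\<Sum>s<n. c $ s * wprod n m (u s) q)"
proof -
  have "wprod n m (cols_mat n u *\<^sub>v c) q = (\<Sum>i<n. \<Sum>s<n. c $ s * (m i * u s $ i * q $ i))"
    unfolding wprod_def cols_mat_mult_vec[OF assms]
    by (simp add: sum_distrib_left sum_distrib_right ac_simps)
  also have "\<dots> = (\<Sum>s<n. c $ s * wprod n m (u s) q)"
    unfolding wprod_def by (subst sum.swap) (simp add: sum_distrib_left)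
  finally show ?thesis .
qed

lemma wprod_mult_vec_left:
  fixes Y :: "'a::comm_ring_1 mat"
  assumes Y: "Y \<in> carrier_mat n n"
    and sym: "\<And>i j. i < n \<Longrightarrow> j < n \<Longrightarrow> m i * Y $$ (i, j) = m j * Y $$ (j, i)"
    and p: "p \<in> carrier_vec n" and q: "q \<in> carrier_vec n"
  shows "wprod n m (Y *\<^sub>v p) q = wprod n m p (Y *\<^sub>v q)"
proof -
  have nth: "(Y *\<^sub>v v) $ i = (\<Sum>j<n. Y $$ (i, j) * v $ j)" if "v \<in> carrier_vec n" "i < n" for v i
    using Y that by (simp add: mult_mat_vec_def scalar_prod_def lessThan_atLeast0)
  have "wprod n m (Y *\<^sub>v p) q = (\<Sum>i<n. \<Sum>j<n. m i * Y $$ (i, j) * p $ j * q $ i)"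
    unfolding wprod_def using nth[OF p]
    by (simp add: sum_distrib_left sum_distrib_right ac_simps)
  also have "\<dots> = (\<Sum>i<n. \<Sum>j<n. m j * Y $$ (j, i) * p $ j * q $ i)"
    by (intro sum.cong refl) (simp add: sym)
  also have "\<dots> = wprod n m p (Y *\<^sub>v q)"
    unfolding wprod_def using nth[OF q]
    by (subst sum.swap) (simp add: sum_distrib_left sum_distrib_right ac_simps)
  finally show ?thesis .
qed

lemma bipartite_tridiagonal_symmetrizable:
  fixes M :: "'a::field mat"
  assumes "bipartite_tridiagonal n M"
  obtains m where "\<And>i. i < n \<Longrightarrow> m i \<noteq> 0"
    "\<And>i j. i < n \<Longrightarrow> j < n \<Longrightarrow> m i * M $$ (i, j) = m j * M $$ (j, i)"
proof
  define m where "m i = (\<Prod>k<i. M $$ (k, k + 1) / M $$ (k + 1, k))" for i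
  have off: "M $$ (k, k + 1) \<noteq> 0" "M $$ (k + 1, k) \<noteq> 0" if "k + 1 < n" for k
    using assms that unfolding bipartite_tridiagonal_def by auto
  show "m i \<noteq> 0" if "i < n" for i
    unfolding m_def using off that by (simp add: prod_zero_iff)
  have step: "m (k + 1) * M $$ (k + 1, k) = m k * M $$ (k, k + 1)" if "k + 1 < n" for k
    unfolding m_def using off[OF that] by simp
  show "m i * M $$ (i, j) = m j * M $$ (j, i)" if "i < n" "j < n" for i j
  proof -
    consider "j = i + 1" | "i = j + 1" | "j \<noteq> i + 1" "i \<noteq> j + 1" by blast
    then show ?thesis
    proof cases
      case 1 then show ?thesis using step[of i] that by simp
    next
      case 2 then show ?thesis using step[of j] that by simp
    next
      case 3 then show ?thesis using assms that unfolding bipartite_tridiagonal_def by auto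
    qed
  qed
qed

section \<open>Expansion in an eigenbasis\<close>

locale weighted_eigenbasis =
  fixes n :: nat and Y :: "'a::field mat" and m th :: "nat \<Rightarrow> 'a"
    and u :: "nat \<Rightarrow> 'a vec" and F :: "nat \<Rightarrow> 'a mat"
  assumes carrier: "Y \<in> carrier_mat n n"
    and weight_nonzero: "\<And>i. i < n \<Longrightarrow> m i \<noteq> 0"
    and weight_symmetric: "\<And>i j. i < n \<Longrightarrow> j < n \<Longrightarrow> m i * Y $$ (i, j) = m j * Y $$ (j, i)"
    and eigval_inj: "inj_on th {..<n}"
    and eigvec_carrier: "\<And>s. s < n \<Longrightarrow> u s \<in> carrier_vec n"
    and eigvec_nonzero: "\<And>s. s < n \<Longrightarrow> u s \<noteq> 0\<^sub>v n"
    and eigvec: "\<And>s. s < n \<Longrightarrow> Y *\<^sub>v u s = th s \<cdot>\<^sub>v u s"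
    and idem_carrier: "\<And>s. s < n \<Longrightarrow> F s \<in> carrier_mat n n"
    and idem_eigvec: "\<And>r s. r < n \<Longrightarrow> s < n \<Longrightarrow> F r *\<^sub>v u s = (if r = s then u s else 0\<^sub>v n)"
begin

abbreviation U :: "'a mat" where "U \<equiv> cols_mat n u"

lemma wprod_eigvec_orthogonal:
  assumes "r < n" "s < n" "r \<noteq> s"
  shows "wprod n m (u r) (u s) = 0"
proof -
  have "th r * wprod n m (u r) (u s) = wprod n m (Y *\<^sub>v u r) (u s)"
    using assms eigvec eigvec_carrier by (simp add: wprod_smult_left)
  also have "\<dots> = wprod n m (u r) (Y *\<^sub>v u s)"
    using assms by (intro wprod_mult_vec_left carrier weight_symmetric eigvec_carrier)
  also have "\<dots> = th s * wprod n m (u r) (u s)"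
    using assms eigvec eigvec_carrier wprod_comm[of n m "u r"] by (simp add: wprod_smult_left)
  finally have "(th r - th s) * wprod n m (u r) (u s) = 0" by (simp add: algebra_simps)
  moreover have "th r \<noteq> th s" using inj_onD[OF eigval_inj, of r s] assms by auto
  ultimately show ?thesis by simp
qed

lemma idem_mult_expansion:
  assumes "r < n" "c \<in> carrier_vec n"
  shows "F r *\<^sub>v (U *\<^sub>v c) = c $ r \<cdot>\<^sub>v u r"
proof -
  have "F r *\<^sub>v (U *\<^sub>v c) = (F r * U) *\<^sub>v c"
    using assoc_mult_mat_vec[OF idem_carrier[OF assms(1)] cols_mat_carrier assms(2)] by simp
  also have "\<dots> = vec n (\<lambda>i. \<Sum>s<n. c $ s * (F r *\<^sub>v u s) $ i)"
  proof -
    have "F r * U = cols_mat n (\<lambda>s. F r *\<^sub>v u s)"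
      by (rule mult_cols_mat) (use assms idem_carrier eigvec_carrier in auto)
    then show ?thesis using cols_mat_mult_vec[OF assms(2)] by simp
  qed
  also have "\<dots> = c $ r \<cdot>\<^sub>v u r"
  proof (rule eq_vecI)
    fix i assume "i < dim_vec (c $ r \<cdot>\<^sub>v u r)"
    then have i: "i < n" using eigvec_carrier[OF assms(1)] by simp
    have "(\<Sum>s<n. c $ s * (F r *\<^sub>v u s) $ i) = (\<Sum>s<n. if s = r then c $ r * u r $ i else 0)"
      using assms i eigvec_carrier by (intro sum.cong) (auto simp: idem_eigvec)
    then show "vec n (\<lambda>i. \<Sum>s<n. c $ s * (F r *\<^sub>v u s) $ i) $ i = (c $ r \<cdot>\<^sub>v u r) $ i"
      using i assms(1) eigvec_carrier[OF assms(1)] by simp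
  qed (use eigvec_carrier[OF assms(1)] in simp)
  finally show ?thesis .
qed

lemma eigvec_expansion:
  assumes "p \<in> carrier_vec n"
  obtains c where "c \<in> carrier_vec n" "p = U *\<^sub>v c"
proof -
  have "c $ r = 0" if "c \<in> carrier_vec n" "U *\<^sub>v c = 0\<^sub>v n" "r < n" for c r
  proof -
    have "c $ r \<cdot>\<^sub>v u r = 0\<^sub>v n"
      using idem_mult_expansion[of r c] that mult_mat_vec_zero_vec[OF idem_carrier] by auto
    then show ?thesis
      using eigvec_carrier[OF that(3)] eigvec_nonzero[OF that(3)] by (intro smult_vec_eq_zero_imp)
  qed
  then have "c = 0\<^sub>v n" if "c \<in> carrier_vec n" "U *\<^sub>v c = 0\<^sub>v n" for c
    using that by (intro eq_vecI) auto
  then obtain C where C: "C \<in> carrier_mat n n" "U * C = 1\<^sub>m n" "C * U = 1\<^sub>m n"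
    by (rule inverse_mat_of_kernel_trivial[OF cols_mat_carrier])
  show ?thesis
  proof
    show "C *\<^sub>v p \<in> carrier_vec n" using C assms by simp
    show "p = U *\<^sub>v (C *\<^sub>v p)" using C assms by (simp flip: assoc_mult_mat_vec[of U n n C n])
  qed
qed

lemma wprod_expansion:
  assumes "c \<in> carrier_vec n" "s < n"
  shows "wprod n m (U *\<^sub>v c) (u s) = c $ s * wprod n m (u s) (u s)"
proof -
  have "wprod n m (U *\<^sub>v c) (u s) = (\<Sum>r<n. c $ r * wprod n m (u r) (u s))"
    by (rule wprod_cols_mat_mult_vec[OF assms(1)])
  also have "\<dots> = (\<Sum>r<n. if r = s then c $ s * wprod n m (u s) (u s) else 0)"
    using assms(2) wprod_eigvec_orthogonal by (intro sum.cong) auto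
  finally show ?thesis using assms(2) by simp
qed

text \<open>Over an arbitrary field \<open>wprod\<close> may be isotropic; it is the expansion in the
  eigenbasis (through the primitive idempotents) that makes it nondegenerate on eigenvectors.\<close>

lemma wprod_eigvec_self_nonzero:
  assumes "s < n"
  shows "wprod n m (u s) (u s) \<noteq> 0"
proof
  assume null: "wprod n m (u s) (u s) = 0"
  have "m i * u s $ i = 0" if "i < n" for i
  proof -
    obtain c where c: "c \<in> carrier_vec n" "unit_vec n i = U *\<^sub>v c"
      using eigvec_expansion[of "unit_vec n i"] by auto
    have "wprod n m (unit_vec n i) (u s) = 0"
      using wprod_expansion[OF c(1) assms] null c(2) by simp
    moreover have "wprod n m (unit_vec n i) (u s) = (\<Sum>j<n. if j = i then m i * u s $ i else 0)"
      unfolding wprod_def using that by (intro sum.cong) (auto simp: unit_vec_def)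
    ultimately show ?thesis using that by simp
  qed
  then have "u s = 0\<^sub>v n"
    using weight_nonzero eigvec_carrier[OF assms] by (intro eq_vecI) auto
  then show False using eigvec_nonzero[OF assms] by contradiction
qed

lemma expansion_coeff_eq_zero:
  assumes "c \<in> carrier_vec n" "s < n" "wprod n m (U *\<^sub>v c) (u s) = 0"
  shows "c $ s = 0"
  using wprod_expansion[OF assms(1,2)] wprod_eigvec_self_nonzero[OF assms(2)] assms(3) by simp

lemma sandwich_zero_imp_wprod_zero:
  assumes "r < n" "s < n" "F r * mat_diag n t * F s = 0\<^sub>m n n"
  shows "wprod n m (mat_diag n t *\<^sub>v u r) (u s) = 0"
proof -
  let ?q = "mat_diag n t *\<^sub>v u s"
  have q: "?q \<in> carrier_vec n" by (rule mult_mat_vec_carrier[OF mat_diag_dim eigvec_carrier[OF assms(2)]])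
  have "F r *\<^sub>v ?q = F r *\<^sub>v (mat_diag n t *\<^sub>v (F s *\<^sub>v u s))"
    using assms(2) idem_eigvec by simp
  also have "\<dots> = (F r * mat_diag n t * F s) *\<^sub>v u s"
    using idem_carrier[OF assms(1)] idem_carrier[OF assms(2)] eigvec_carrier[OF assms(2)]
    by (simp add: assoc_mult_mat_vec[of _ n n _ n])
  also have "\<dots> = 0\<^sub>v n"
    unfolding assms(3) by (rule zero_mat_mult_vec[OF eigvec_carrier[OF assms(2)]])
  finally have Fq: "F r *\<^sub>v ?q = 0\<^sub>v n" .
  obtain c where c: "c \<in> carrier_vec n" "?q = U *\<^sub>v c" using eigvec_expansion[OF q] .
  have "c $ r \<cdot>\<^sub>v u r = 0\<^sub>v n" using idem_mult_expansion[OF assms(1) c(1)] Fq c(2) by simp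
  then have "c $ r = 0"
    using eigvec_carrier[OF assms(1)] eigvec_nonzero[OF assms(1)] by (intro smult_vec_eq_zero_imp)
  then have "wprod n m ?q (u r) = 0" using wprod_expansion[OF c(1) assms(1)] c(2) by simp
  moreover have "wprod n m (mat_diag n t *\<^sub>v u r) (u s) = wprod n m (u r) ?q"
    using eigvec_carrier[OF assms(1)] eigvec_carrier[OF assms(2)]
    by (intro wprod_mult_vec_left) (auto simp: mat_diag_def)
  ultimately show ?thesis by (simp add: wprod_comm)
qed

lemma expansion_nth:
  assumes "c \<in> carrier_vec n" "i < n"
  shows "(U *\<^sub>v c) $ i = (\<Sum>s<n. c $ s * u s $ i)"
  using assms by (simp add: cols_mat_mult_vec)

lemma mult_vec_expansion_nth:
  assumes "c \<in> carrier_vec n" "i < n"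
  shows "(Y *\<^sub>v (U *\<^sub>v c)) $ i = (\<Sum>s<n. c $ s * th s * u s $ i)"
proof -
  have "Y * U = cols_mat n (\<lambda>s. Y *\<^sub>v u s)"
    by (rule mult_cols_mat) (use carrier eigvec_carrier in auto)
  then have "Y *\<^sub>v (U *\<^sub>v c) = cols_mat n (\<lambda>s. Y *\<^sub>v u s) *\<^sub>v c"
    using assoc_mult_mat_vec[OF carrier cols_mat_carrier[of n u] assms(1)] by simp
  then have "(Y *\<^sub>v (U *\<^sub>v c)) $ i = (\<Sum>s<n. c $ s * (Y *\<^sub>v u s) $ i)"
    using assms by (simp add: cols_mat_mult_vec)
  also have "\<dots> = (\<Sum>s<n. c $ s * th s * u s $ i)"
  proof (rule sum.cong)
    fix s assume "s \<in> {..<n}"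
    then show "c $ s * (Y *\<^sub>v u s) $ i = c $ s * th s * u s $ i"
      using assms(2) eigvec[of s] eigvec_carrier[of s] by simp
  qed simp
  finally show ?thesis .
qed

lemma tail_diag_affine:
  assumes ones: "u 0 = vec n (\<lambda>_. 1)" and n: "1 < n"
    and tail0: "\<And>s. s < n \<Longrightarrow> s \<noteq> 0 \<Longrightarrow> s \<noteq> 1 \<Longrightarrow> F 0 * mat_diag n t * F s = 0\<^sub>m n n"
  obtains a b where "\<And>i. i < n \<Longrightarrow> t i = a + b * u 1 $ i"
proof -
  have tv: "mat_diag n t *\<^sub>v u 0 = vec n t"
    unfolding ones by (auto simp: mat_diag_mult_vec intro!: eq_vecI)
  obtain c where c: "c \<in> carrier_vec n" "vec n t = U *\<^sub>v c"
    using eigvec_expansion[of "vec n t"] by auto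
  have c0: "c $ s = 0" if "s < n" "s \<noteq> 0" "s \<noteq> 1" for s
    using sandwich_zero_imp_wprod_zero[OF _ that(1) tail0[OF that]] n tv c
    by (intro expansion_coeff_eq_zero[OF c(1) that(1)]) simp
  have "t i = c $ 0 + c $ 1 * u 1 $ i" if i: "i < n" for i
  proof -
    have "t i = (\<Sum>s<n. c $ s * u s $ i)"
      using expansion_nth[OF c(1) i] arg_cong[OF c(2), of "\<lambda>v. v $ i"] i by simp
    also have "\<dots> = (\<Sum>s\<in>{0, 1}. c $ s * u s $ i)"
      using n c0 by (intro sum.mono_neutral_right) auto
    finally show ?thesis using ones i by simp
  qed
  then show ?thesis by (rule that)
qed

text \<open>Since \<open>A\<^sup>*u\<^sub>1 = a u\<^sub>1 + b u\<^sub>1\<^sup>2\<close>, the tail condition at \<open>E\<^sub>1\<close> confines \<open>u\<^sub>1\<^sup>2\<close> to the span of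
  \<open>u\<^sub>0, u\<^sub>1, u\<^sub>k\<close>.\<close>

lemma tail_square_quadratic:
  assumes ones: "u 0 = vec n (\<lambda>_. 1)" and n: "1 < n" and k: "k < n"
    and affine: "\<And>i. i < n \<Longrightarrow> t i = a + b * u 1 $ i" and b: "b \<noteq> 0"
    and tail1: "\<And>s. s < n \<Longrightarrow> s \<noteq> 0 \<Longrightarrow> s \<noteq> 1 \<Longrightarrow> s \<noteq> k \<Longrightarrow> F 1 * mat_diag n t * F s = 0\<^sub>m n n"
  obtains r2 r1 r0 where
    "\<And>i. i < n \<Longrightarrow> (Y *\<^sub>v vec n (\<lambda>j. (u 1 $ j)\<^sup>2)) $ i = r2 * (u 1 $ i)\<^sup>2 + r1 * u 1 $ i + r0"
proof -
  let ?x = "u 1" and ?sq = "vec n (\<lambda>j. (u 1 $ j)\<^sup>2)"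
  have x: "?x \<in> carrier_vec n" using eigvec_carrier n by simp
  have Dx: "wprod n m (mat_diag n t *\<^sub>v ?x) q = a * wprod n m ?x q + b * wprod n m ?sq q" for q
  proof -
    have "(mat_diag n t *\<^sub>v ?x) $ i = a * ?x $ i + b * ?sq $ i" if "i < n" for i
      using affine[OF that] x that by (simp add: mat_diag_mult_vec power2_eq_square algebra_simps)
    then show ?thesis
      unfolding wprod_def by (simp add: sum_distrib_left sum.distrib algebra_simps)
  qed
  obtain e where e: "e \<in> carrier_vec n" "?sq = U *\<^sub>v e"
    using eigvec_expansion[of ?sq] by auto
  have e0: "e $ s = 0" if "s < n" "s \<noteq> 0" "s \<noteq> 1" "s \<noteq> k" for s
  proof (rule expansion_coeff_eq_zero[OF e(1) that(1)])
    have "wprod n m (mat_diag n t *\<^sub>v ?x) (u s) = 0"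
      using sandwich_zero_imp_wprod_zero[OF _ that(1) tail1[OF that]] n by simp
    moreover have "wprod n m ?x (u s) = 0" using wprod_eigvec_orthogonal n that by simp
    ultimately show "wprod n m (U *\<^sub>v e) (u s) = 0" using Dx[of "u s"] b e(2) by simp
  qed
  have "(Y *\<^sub>v ?sq) $ i = th k * (?x $ i)\<^sup>2 + e $ 1 * (th 1 - th k) * ?x $ i + e $ 0 * (th 0 - th k)"
    if i: "i < n" for i
  proof -
    have "(Y *\<^sub>v ?sq) $ i - th k * ?sq $ i = (\<Sum>s<n. e $ s * (th s - th k) * u s $ i)"
      unfolding e(2) mult_vec_expansion_nth[OF e(1) i] expansion_nth[OF e(1) i]
      by (simp add: sum_distrib_left sum_subtractf[symmetric] algebra_simps)
    also have "\<dots> = (\<Sum>s\<in>{0, 1}. e $ s * (th s - th k) * u s $ i)"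
      using n e0 by (intro sum.mono_neutral_right) auto
    finally show ?thesis using ones i by (simp add: algebra_simps)
  qed
  then show ?thesis by (rule that)
qed

end

section \<open>A three-term recurrence on a conic\<close>

lemma conic_step:
  fixes ta tb \<sigma> L K b c u y w :: "'a::field"
  assumes ta: "ta \<noteq> 0"
    and key: "ta * Q y = tb * y * (\<sigma> * y - L) - ta * (ta * y\<^sup>2 + L * y - K)"
    and conic: "ta * u\<^sup>2 + ta * y\<^sup>2 - \<sigma> * u * y + L * (u + y) = K"
    and row: "c + b = ta" and eig: "c * u + b * w = tb * y" and sq: "c * u\<^sup>2 + b * w\<^sup>2 = Q y"
    and b: "b \<noteq> 0" and uw: "u \<noteq> w"
  shows "ta * (u + w) = \<sigma> * y - L" "ta * y\<^sup>2 + ta * w\<^sup>2 - \<sigma> * y * w + L * (y + w) = K"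
proof -
  define w' where "w' = (\<sigma> * y - L) / ta - u"
  have sum': "ta * u + ta * w' = \<sigma> * y - L" unfolding w'_def using ta by (simp add: field_simps)
  have prod': "ta * u * w' = ta * y\<^sup>2 + L * y - K"
  proof -
    have "ta * u * w' = u * (ta * u + ta * w') - ta * u\<^sup>2" by (simp add: algebra_simps power2_eq_square)
    also have "\<dots> = u * (\<sigma> * y - L) - ta * u\<^sup>2" using sum' by simp
    also have "\<dots> = ta * y\<^sup>2 + L * y - K" using conic by (simp add: algebra_simps power2_eq_square)
    finally show ?thesis .
  qed
  have vieta: "ta * u * v - tb * y * (u + v) + Q y = 0 \<longleftrightarrow> v = w'" for v
  proof -
    have "ta * Q y = tb * y * (ta * u + ta * w') - ta * (ta * u * w')"
      using key sum' prod' by simp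
    then have "ta * (ta * u * v - tb * y * (u + v) + Q y) = (ta * u - tb * y) * (ta * v - ta * w')"
      by (simp add: algebra_simps)
    moreover have "ta * u - tb * y \<noteq> 0"
    proof
      assume "ta * u - tb * y = 0"
      have "b * (w - u) = (c * u + b * w) - (c + b) * u" by (simp add: algebra_simps)
      also have "\<dots> = 0" using row eig \<open>ta * u - tb * y = 0\<close> by simp
      finally have "b * (w - u) = 0" .
      then show False using b uw by simp
    qed
    ultimately show ?thesis using ta by auto
  qed
  have "ta * u * w - tb * y * (u + w) + Q y = (c + b) * u * w - (c * u + b * w) * (u + w) + (c * u\<^sup>2 + b * w\<^sup>2)"
    using row eig sq by simp
  also have "\<dots> = 0" by (simp add: algebra_simps power2_eq_square)
  finally have w: "w = w'" using vieta by simp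
  show "ta * (u + w) = \<sigma> * y - L" using sum' w by (simp add: algebra_simps)
  have \<sigma>y: "\<sigma> * y = ta * u + ta * w + L" using sum' w by (simp add: algebra_simps)
  have "ta * y\<^sup>2 + ta * w\<^sup>2 - \<sigma> * y * w + L * (y + w) = ta * y\<^sup>2 + L * y - ta * u * w"
    unfolding \<sigma>y by (simp add: algebra_simps power2_eq_square)
  then show "ta * y\<^sup>2 + ta * w\<^sup>2 - \<sigma> * y * w + L * (y + w) = K" using prod' w by simp
qed

lemma three_term_recurrence_coeffs_nonzero:
  fixes b c x :: "nat \<Rightarrow> 'a::field"
  assumes d: "3 \<le> d" and c0: "c 0 = 0" and b: "\<And>i. i < d \<Longrightarrow> b i \<noteq> 0"
    and row: "\<And>i. i < d \<Longrightarrow> c i + b i = ta"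
    and eig: "\<And>i. i < d \<Longrightarrow> c i * x (i - 1) + b i * x (i + 1) = tb * x i"
    and inj: "inj_on x {..d}"
  shows "ta \<noteq> 0" "tb \<noteq> 0" "ta + tb \<noteq> 0"
proof -
  have b0: "b 0 = ta" using row[of 0] c0 d by simp
  show ta: "ta \<noteq> 0" using b[of 0] b0 d by simp
  have x_ne: "x i \<noteq> x j" if "i \<le> d" "j \<le> d" "i \<noteq> j" for i j
    using inj_onD[OF inj, of i j] that by auto
  show "tb \<noteq> 0"
  proof
    assume "tb = 0"
    then have "x 1 = 0" using eig[of 0] c0 b[of 0] d by simp
    then have "b 2 * x 3 = 0" using eig[of 2] \<open>tb = 0\<close> d by simp
    then show False using b[of 2] x_ne[of 1 3] \<open>x 1 = 0\<close> d by simp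
  qed
  show "ta + tb \<noteq> 0"
  proof
    assume "ta + tb = 0"
    then have "tb = - ta" by (simp add: eq_neg_iff_add_eq_0 add.commute)
    then have "ta * x 1 = ta * (- x 0)" using eig[of 0] c0 b0 d by simp
    then have x1: "x 1 = - x 0" using ta by (metis mult_left_cancel)
    have "b 1 * (x 2 - x 0) = (c 1 * x 0 + b 1 * x 2) - (c 1 + b 1) * x 0" by (simp add: algebra_simps)
    also have "\<dots> = 0" using eig[of 1] row[of 1] x1 \<open>tb = - ta\<close> d
      by (simp add: algebra_simps numeral_2_eq_2)
    finally show False using b[of 1] x_ne[of 2 0] d by simp
  qed
qed

lemma conic_three_term_recurrence:
  fixes b c x :: "nat \<Rightarrow> 'a::field"
  assumes d: "3 \<le> d" and c0: "c 0 = 0" and b: "\<And>i. i < d \<Longrightarrow> b i \<noteq> 0"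
    and row: "\<And>i. i < d \<Longrightarrow> c i + b i = ta"
    and eig: "\<And>i. i < d \<Longrightarrow> c i * x (i - 1) + b i * x (i + 1) = tb * x i"
    and sq: "\<And>i. i < d \<Longrightarrow> c i * (x (i - 1))\<^sup>2 + b i * (x (i + 1))\<^sup>2 = rq * (x i)\<^sup>2 + rl * x i + rk"
    and inj: "inj_on x {..d}"
  shows "\<exists>\<beta> e. \<forall>i. 1 \<le> i \<and> i \<le> d - 1 \<longrightarrow> x (i - 1) - \<beta> * x i + x (i + 1) = e"
proof -
  note nonzero = three_term_recurrence_coeffs_nonzero[OF d c0 b row eig inj]
  have ta: "ta \<noteq> 0" and tb: "tb \<noteq> 0" and tab: "ta + tb \<noteq> 0" using nonzero by auto
  have b0: "b 0 = ta" using row[of 0] c0 d by simp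
  \<comment> \<open>\<open>\<sigma>\<close> and \<open>L\<close> are chosen to make \<open>key\<close> an identity.\<close>
  define \<sigma> where "\<sigma> = ta * (rq + ta) / tb"
  define L where "L = - rl * ta / (ta + tb)"
  define Q where "Q y = rq * y\<^sup>2 + rl * y + rk" for y
  define P where "P u y = ta * u\<^sup>2 + ta * y\<^sup>2 - \<sigma> * u * y + L * (u + y)" for u y
  have key: "ta * Q y = tb * y * (\<sigma> * y - L) - ta * (ta * y\<^sup>2 + L * y - rk)" for y
  proof -
    have \<sigma>: "tb * \<sigma> = ta * rq + ta * ta" unfolding \<sigma>_def using tb by (simp add: field_simps)
    have L: "L * (ta + tb) = - rl * ta" unfolding L_def using tab by simp
    have "tb * y * (\<sigma> * y - L) - ta * (ta * y\<^sup>2 + L * y - rk)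
        = y\<^sup>2 * (tb * \<sigma>) - y * (L * (ta + tb)) - ta * ta * y\<^sup>2 + ta * rk"
      by (simp add: algebra_simps power2_eq_square)
    also have "\<dots> = ta * Q y" unfolding \<sigma> L Q_def by (simp add: algebra_simps power2_eq_square)
    finally show ?thesis ..
  qed
  have base: "P (x 0) (x 1) = rk"
  proof -
    have "ta * (ta * (x 1)\<^sup>2) = ta * Q (x 0)" using sq[of 0] b0 c0 d by (simp add: Q_def)
    also have "\<dots> = ta * (x 1 * (\<sigma> * x 0 - L) - (ta * (x 0)\<^sup>2 + L * x 0 - rk))"
      unfolding key using eig[of 0] b0 c0 d by (simp add: algebra_simps)
    finally have "ta * (x 1)\<^sup>2 = x 1 * (\<sigma> * x 0 - L) - (ta * (x 0)\<^sup>2 + L * x 0 - rk)"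
      using ta by (metis mult_left_cancel)
    then show ?thesis unfolding P_def by (simp add: algebra_simps power2_eq_square)
  qed
  have step: "ta * (x (i - 1) + x (i + 1)) = \<sigma> * x i - L \<and> P (x i) (x (i + 1)) = rk"
    if "P (x (i - 1)) (x i) = rk" "i < d" for i
  proof -
    have "i - 1 \<le> d" "i + 1 \<le> d" "i - 1 \<noteq> i + 1" using that(2) by auto
    then have "x (i - 1) \<noteq> x (i + 1)" using inj_onD[OF inj, of "i - 1" "i + 1"] by auto
    then show ?thesis
      using conic_step[where Q = Q, OF ta key that(1)[unfolded P_def] row eig sq[folded Q_def] b] that(2)
      unfolding P_def by auto
  qed
  have conic: "P (x i) (x (i + 1)) = rk" if "i < d" for i
    using that
  proof (induction i)
    case (Suc i)
    then show ?case using step[of "Suc i"] by simp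
  qed (use base in simp)
  show ?thesis
  proof (intro exI allI impI)
    fix i assume i: "1 \<le> i \<and> i \<le> d - 1"
    then have "i < d" "i - 1 < d" using d by auto
    then have "ta * (x (i - 1) + x (i + 1)) = \<sigma> * x i - L"
      using step[of i] conic[of "i - 1"] i by simp
    then have "x (i - 1) + x (i + 1) = (\<sigma> * x i - L) / ta"
      using ta by (simp add: eq_divide_eq mult.commute)
    then have "x (i - 1) + x (i + 1) = \<sigma> / ta * x i - L / ta" by (simp add: diff_divide_distrib)
    then show "x (i - 1) - \<sigma> / ta * x i + x (i + 1) = - L / ta" by (simp add: algebra_simps)
  qed
qed

lemma bipartite_tridiagonal_mult_vec_nth:
  fixes M :: "'a::comm_semiring_0 mat"
  assumes M: "bipartite_tridiagonal n M" and p: "p \<in> carrier_vec n" and i: "i + 1 < n"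
  shows "(M *\<^sub>v p) $ i = M $$ (i, i - 1) * p $ (i - 1) + M $$ (i, i + 1) * p $ (i + 1)"
proof -
  have "M \<in> carrier_mat n n" using M unfolding bipartite_tridiagonal_def by simp
  then have "(M *\<^sub>v p) $ i = (\<Sum>j<n. M $$ (i, j) * p $ j)"
    using p i by (simp add: mult_mat_vec_def scalar_prod_def lessThan_atLeast0 carrier_matD)
  also have "\<dots> = (\<Sum>j\<in>{i - 1, i + 1}. M $$ (i, j) * p $ j)"
  proof (rule sum.mono_neutral_right)
    show "\<forall>j\<in>{..<n} - {i - 1, i + 1}. M $$ (i, j) * p $ j = 0"
    proof
      fix j assume "j \<in> {..<n} - {i - 1, i + 1}"
      then have "j < n" "j \<noteq> i + 1 \<and> i \<noteq> j + 1" by auto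
      then show "M $$ (i, j) * p $ j = 0" using M i unfolding bipartite_tridiagonal_def by simp
    qed
  qed (use i in auto)
  finally show ?thesis by simp
qed

lemma bipartite_tridiagonal_recurrence:
  fixes M :: "'a::field mat"
  assumes d: "3 \<le> d" and M: "bipartite_tridiagonal (Suc d) M"
    and ones: "M *\<^sub>v vec (Suc d) (\<lambda>_. 1) = ta \<cdot>\<^sub>v vec (Suc d) (\<lambda>_. 1)"
    and x: "x \<in> carrier_vec (Suc d)" "M *\<^sub>v x = tb \<cdot>\<^sub>v x"
    and sq: "\<And>i. i \<le> d \<Longrightarrow> (M *\<^sub>v vec (Suc d) (\<lambda>j. (x $ j)\<^sup>2)) $ i = r2 * (x $ i)\<^sup>2 + r1 * x $ i + r0"
    and inj: "inj_on (\<lambda>i. x $ i) {..d}"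
  shows "\<exists>\<beta> e. \<forall>i. 1 \<le> i \<and> i \<le> d - 1 \<longrightarrow> x $ (i - 1) - \<beta> * x $ i + x $ (i + 1) = e"
proof (rule conic_three_term_recurrence[OF d, where c = "\<lambda>i. M $$ (i, i - 1)" and b = "\<lambda>i. M $$ (i, i + 1)"])
  \<comment> \<open>Row \<open>0\<close> fits the same pattern: \<open>0 - 1 = 0\<close> on \<open>nat\<close> and the diagonal vanishes.\<close>
  have nth: "(M *\<^sub>v p) $ i = M $$ (i, i - 1) * p $ (i - 1) + M $$ (i, i + 1) * p $ (i + 1)"
    if "p \<in> carrier_vec (Suc d)" "i < d" for p i
    using bipartite_tridiagonal_mult_vec_nth[OF M that(1)] that(2) by simp
  show "M $$ (0, 0 - 1) = 0" using M unfolding bipartite_tridiagonal_def by simp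
  show "M $$ (i, i + 1) \<noteq> 0" if "i < d" for i using M that unfolding bipartite_tridiagonal_def by simp
  show "M $$ (i, i - 1) + M $$ (i, i + 1) = ta" if "i < d" for i
    using nth[of "vec (Suc d) (\<lambda>_. 1)" i] ones that by simp
  show "M $$ (i, i - 1) * x $ (i - 1) + M $$ (i, i + 1) * x $ (i + 1) = tb * x $ i" if "i < d" for i
    using nth[OF x(1) that] x that by simp
  show "M $$ (i, i - 1) * (x $ (i - 1))\<^sup>2 + M $$ (i, i + 1) * (x $ (i + 1))\<^sup>2
      = r2 * (x $ i)\<^sup>2 + r1 * x $ i + r0" if "i < d" for i
    using nth[of "vec (Suc d) (\<lambda>j. (x $ j)\<^sup>2)" i] sq[of i] that by simp
qed (rule inj)

lemma bipartite_tridiagonal_weighted_eigenbasis: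
  fixes M :: "'a::field mat"
  assumes M: "bipartite_tridiagonal (Suc d) M"
    and ones: "M *\<^sub>v vec (Suc d) (\<lambda>_. 1) = th 0 \<cdot>\<^sub>v vec (Suc d) (\<lambda>_. 1)"
    and th: "inj_on th {..d}" and eig: "\<And>s. s \<le> d \<Longrightarrow> eigenvalue M (th s)"
    and prim: "\<And>s. s \<le> d \<Longrightarrow> primitive_idem (Suc d) d M th s (F s)"
  obtains m u where "weighted_eigenbasis (Suc d) M m th u F" "u 0 = vec (Suc d) (\<lambda>_. 1)"
proof -
  let ?n = "Suc d" and ?one = "vec (Suc d) (\<lambda>_. 1::'a)"
  have Mc: "M \<in> carrier_mat ?n ?n" using M unfolding bipartite_tridiagonal_def by simp
  obtain v where v: "\<And>s. s \<le> d \<Longrightarrow> eigenvector M (v s) (th s)"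
    using eig unfolding eigenvalue_def by metis
  define u where "u s = (if s = 0 then ?one else v s)" for s
  have one_nonzero: "?one \<noteq> 0\<^sub>v ?n" by (metis index_vec index_zero_vec(1) zero_less_Suc zero_neq_one)
  have u: "u s \<in> carrier_vec ?n" "u s \<noteq> 0\<^sub>v ?n" "M *\<^sub>v u s = th s \<cdot>\<^sub>v u s" if "s < ?n" for s
    using v[of s] that ones one_nonzero Mc unfolding u_def eigenvector_def by auto
  obtain m where m: "\<And>i. i < ?n \<Longrightarrow> m i \<noteq> 0"
    "\<And>i j. i < ?n \<Longrightarrow> j < ?n \<Longrightarrow> m i * M $$ (i, j) = m j * M $$ (j, i)"
    using bipartite_tridiagonal_symmetrizable[OF M] by blast
  have "weighted_eigenbasis ?n M m th u F"
  proof
    show "inj_on th {..<?n}" using th by (simp add: lessThan_Suc_atMost)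
    show "F s \<in> carrier_mat ?n ?n" if "s < ?n" for s using prim[of s] that unfolding primitive_idem_def by simp
    show "F r *\<^sub>v u s = (if r = s then u s else 0\<^sub>v ?n)" if "r < ?n" "s < ?n" for r s
      using prim[of r] u[OF that(2)] that unfolding primitive_idem_def by (auto simp: less_Suc_eq_le)
  qed (use Mc m u in auto)
  moreover have "u 0 = ?one" by (simp add: u_def)
  ultimately show ?thesis by (rule that)
qed

lemma bipartite_tridiagonal_tail_recurrence:
  fixes M :: "'a::field mat"
  assumes d: "3 \<le> d" and M: "bipartite_tridiagonal (Suc d) M"
    and ones: "M *\<^sub>v vec (Suc d) (\<lambda>_. 1) = th 0 \<cdot>\<^sub>v vec (Suc d) (\<lambda>_. 1)"
    and th: "inj_on th {..d}" and eig: "\<And>s. s \<le> d \<Longrightarrow> eigenvalue M (th s)"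
    and prim: "\<And>s. s \<le> d \<Longrightarrow> primitive_idem (Suc d) d M th s (F s)"
    and ts: "inj_on ts {..d}" and k: "k \<le> d"
    and tail0: "\<And>s. s \<le> d \<Longrightarrow> s \<noteq> 0 \<Longrightarrow> s \<noteq> 1 \<Longrightarrow>
      F 0 * mat_diag (Suc d) ts * F s = 0\<^sub>m (Suc d) (Suc d)"
    and tail1: "\<And>s. s \<le> d \<Longrightarrow> s \<noteq> 0 \<Longrightarrow> s \<noteq> 1 \<Longrightarrow> s \<noteq> k \<Longrightarrow>
      F 1 * mat_diag (Suc d) ts * F s = 0\<^sub>m (Suc d) (Suc d)"
  shows "\<exists>\<beta> c. \<forall>i. 1 \<le> i \<and> i \<le> d - 1 \<longrightarrow> ts (i - 1) - \<beta> * ts i + ts (i + 1) = c"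
proof -
  let ?n = "Suc d"
  obtain m u where basis: "weighted_eigenbasis ?n M m th u F" and u0: "u 0 = vec ?n (\<lambda>_. 1)"
    using bipartite_tridiagonal_weighted_eigenbasis[OF M ones th eig prim] by blast
  interpret weighted_eigenbasis ?n M m th u F by (rule basis)
  have n: "1 < ?n" using d by simp
  obtain a b where affine: "\<And>i. i < ?n \<Longrightarrow> ts i = a + b * u 1 $ i"
    using tail_diag_affine[OF u0 n, of ts] tail0 by (auto simp: less_Suc_eq_le)
  have b: "b \<noteq> 0"
    using inj_onD[OF ts, of 0 1] affine[of 0] affine[of 1] d by auto
  obtain r2 r1 r0 where quad:
    "\<And>i. i < ?n \<Longrightarrow> (M *\<^sub>v vec ?n (\<lambda>j. (u 1 $ j)\<^sup>2)) $ i = r2 * (u 1 $ i)\<^sup>2 + r1 * u 1 $ i + r0"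
    using tail_square_quadratic[OF u0 n _ affine b, of k] tail1 k by (auto simp: less_Suc_eq_le)
  have "inj_on (\<lambda>i. u 1 $ i) {..d}"
    using ts affine unfolding inj_on_def by (metis atMost_iff le_imp_less_Suc)
  then obtain \<beta> e where rec: "\<forall>i. 1 \<le> i \<and> i \<le> d - 1 \<longrightarrow> u 1 $ (i - 1) - \<beta> * u 1 $ i + u 1 $ (i + 1) = e"
    using bipartite_tridiagonal_recurrence[OF d M ones eigvec_carrier eigvec quad] n by auto
  have "ts (i - 1) - \<beta> * ts i + ts (i + 1) = (2 - \<beta>) * a + b * e" if "1 \<le> i \<and> i \<le> d - 1" for i
  proof -
    have "ts (i - 1) - \<beta> * ts i + ts (i + 1) = (2 - \<beta>) * a + b * (u 1 $ (i - 1) - \<beta> * u 1 $ i + u 1 $ (i + 1))"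
    proof -
      have "i - 1 < ?n" "i < ?n" "i + 1 < ?n" using that by auto
      then show ?thesis using affine by (simp add: algebra_simps)
    qed
    then show ?thesis using rec that by simp
  qed
  then show ?thesis by blast
qed

theorem corollary9p5:
  fixes d :: nat
    and Es E :: "nat \<Rightarrow> 'a::field mat"
    and A :: "'a mat"
    and th ts :: "nat \<Rightarrow> 'a"
  assumes d3: "d \<ge> 3"
    and Es: "orth_idem_system (Suc d) d Es"
    and A: "A \<in> carrier_mat (Suc d) (Suc d)"
    and tri0: "\<forall>i\<le>d. \<forall>j\<le>d. (i + 1 < j \<or> j + 1 < i) \<longrightarrow> Es i * A * Es j = 0\<^sub>m (Suc d) (Suc d)"
    and tri1: "\<forall>i\<le>d. \<forall>j\<le>d. (i + 1 = j \<or> j + 1 = i) \<longrightarrow> Es i * A * Es j \<noteq> 0\<^sub>m (Suc d) (Suc d)"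
    and mf: "mult_free_eigs d A th"
    and prim: "\<forall>i\<le>d. primitive_idem (Suc d) d A th i (E i)"
    and bip: "bipartite d Es A"
    and ts: "inj_on ts {..d}"
    and norm: "normalizing (Suc d) d Es A (th 0)"
    and tail: "is_tail (Suc d) d E (mat_lincomb (Suc d) d ts Es)"
  shows "\<exists>\<beta> c. \<forall>i. 1 \<le> i \<and> i \<le> d - 1 \<longrightarrow> ts (i - 1) - \<beta> * ts i + ts (i + 1) = c"
proof -
  obtain M F k where M: "bipartite_tridiagonal (Suc d) M"
    and ones: "M *\<^sub>v vec (Suc d) (\<lambda>_. 1) = th 0 \<cdot>\<^sub>v vec (Suc d) (\<lambda>_. 1)"
    and eig: "\<And>s. s \<le> d \<Longrightarrow> eigenvalue M (th s)"
    and primM: "\<And>s. s \<le> d \<Longrightarrow> primitive_idem (Suc d) d M th s (F s)"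
    and k: "k \<le> d"
    and tail0: "\<And>s. s \<le> d \<Longrightarrow> s \<noteq> 0 \<Longrightarrow> s \<noteq> 1 \<Longrightarrow>
      F 0 * mat_diag (Suc d) ts * F s = 0\<^sub>m (Suc d) (Suc d)"
    and tail1: "\<And>s. s \<le> d \<Longrightarrow> s \<noteq> 0 \<Longrightarrow> s \<noteq> 1 \<Longrightarrow> s \<noteq> k \<Longrightarrow>
      F 1 * mat_diag (Suc d) ts * F s = 0\<^sub>m (Suc d) (Suc d)"
    by (rule normalized_tail_model[OF Es A tri0 tri1 mf prim bip norm tail]) (rule that)
  have "inj_on th {..d}" using mf unfolding mult_free_eigs_def by simp
  then show ?thesis
    using bipartite_tridiagonal_tail_recurrence[OF d3 M ones _ eig primM ts k tail0 tail1] by simp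
qed

end
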